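(* For every total Boolean function $f:\{0,1\}^n\to\{0,1\}$, $\lambda(f)\le\deg(f)$.
   Context: $\deg(f)$ is the degree of the unique multilinear real polynomial agreeing with $f$. The sensitivity graph $G_f$ has vertex set $\{0,1\}^n$ and an edge between $x$ and $y$ iff they differ in exactly one coordinate and $f(x)\ne f(y)$; $A_f$ is its adjacency matrix and $\lambda(f)=\|A_f\|$ (spectral norm). *)

theory Defs
  imports Complex_Main
begin

text \<open>Points of the Boolean cube {0,1}^n are encoded as subsets x of {..<n}
  (x = set of coordinates equal to 1). A Boolean function is f :: nat set => bool;
  only its values on Pow {..<n} matter.\<close>

definition cube :: "nat \<Rightarrow> nat set set" where
  "cube n = Pow {..<n}"

text \<open>A multilinear real polynomial in x_0..x_{n-1} is given by its coefficient
  function c on monomials S (subsets of {..<n}); its value at x is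
  sum over S of c S * prod_{i in S} x_i, i.e. c S summed over S contained in x.\<close>

definition mlpoly_eval :: "nat \<Rightarrow> (nat set \<Rightarrow> real) \<Rightarrow> nat set \<Rightarrow> real" where
  "mlpoly_eval n c x = (\<Sum>S\<in>cube n. c S * (\<Prod>i\<in>S. (if i \<in> x then 1 else 0)))"

definition represents :: "nat \<Rightarrow> (nat set \<Rightarrow> bool) \<Rightarrow> (nat set \<Rightarrow> real) \<Rightarrow> bool" where
  "represents n f c \<longleftrightarrow> (\<forall>S. S \<notin> cube n \<longrightarrow> c S = 0) \<and>
     (\<forall>x\<in>cube n. mlpoly_eval n c x = of_bool (f x))"

definition ml_coeffs :: "nat \<Rightarrow> (nat set \<Rightarrow> bool) \<Rightarrow> nat set \<Rightarrow> real" where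
  "ml_coeffs n f = (THE c. represents n f c)"

text \<open>Degree (the zero polynomial gets degree 0).\<close>
definition bdeg :: "nat \<Rightarrow> (nat set \<Rightarrow> bool) \<Rightarrow> nat" where
  "bdeg n f = Max (insert 0 {card S | S. S \<in> cube n \<and> ml_coeffs n f S \<noteq> 0})"

definition sens_adj :: "nat \<Rightarrow> (nat set \<Rightarrow> bool) \<Rightarrow> nat set \<Rightarrow> nat set \<Rightarrow> real" where
  "sens_adj n f x y = (if x \<in> cube n \<and> y \<in> cube n \<and> card (x - y) + card (y - x) = 1
                          \<and> f x \<noteq> f y then 1 else 0)"

definition spec_norm :: "nat \<Rightarrow> (nat set \<Rightarrow> nat set \<Rightarrow> real) \<Rightarrow> real" where
  "spec_norm n A = Sup {sqrt (\<Sum>x\<in>cube n. (\<Sum>y\<in>cube n. A x y * v y)\<^sup>2) | v.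
                         (\<Sum>y\<in>cube n. (v y)\<^sup>2) \<le> 1}"

definition sens_lambda :: "nat \<Rightarrow> (nat set \<Rightarrow> bool) \<Rightarrow> real" where
  "sens_lambda n f = spec_norm n (sens_adj n f)"

end

theory Submission
  imports Defs "HOL-Analysis.Convex"
begin

text \<open>
  Write g = (-1)^f and L for the Laplacian of the cube, (L v) x = sum_i (v x - v (x + e_i)) / 2,
  which is diagonal in the Walsh basis with eigenvalue |S| on the character chi_S. As operators
  A_f = g [L, g], so the norm of A_f is that of [L, g]. In the Walsh basis, multiplication by g is
  an orthogonal matrix K with K(S,T) = ghat(S sym_diff T) / 2^n; as ghat vanishes on sets of size
  above d = deg f, K is banded: K(S,T) /= 0 forces ||S| - |T|| <= d. The commutator of such a
  matrix with H = diag |S| has norm at most d. Indeed, by Hermite's identity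
  h = sum_{r<d} floor((h + r) / d), and for |h - h'| <= d the corresponding summands differ by at
  most one, so each difference is the sine of a difference of quarter turns. Hence
  [H, K] = sum_{r<d} (D_s K D_c - D_c K D_s) for diagonal matrices with D_c^2 + D_s^2 = 1, and
  each of these d terms has norm at most one.
\<close>

section \<open>The cube and its Walsh characters\<close>

lemma finite_cube [simp]: "finite (cube n)"
  by (simp add: cube_def)

lemma finite_of_mem_cube: "x \<in> cube n \<Longrightarrow> finite x"
  by (auto simp: cube_def intro: finite_subset)

lemma card_cube: "card (cube n) = 2 ^ n"
  by (simp add: cube_def card_Pow)

definition flip :: "nat set \<Rightarrow> nat \<Rightarrow> nat set" where
  "flip x i = (if i \<in> x then x - {i} else insert i x)"

lemma flip_flip [simp]: "flip (flip x i) i = x"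
  by (auto simp: flip_def)

lemma inj_on_flip: "inj_on (flip x) A"
  by (auto simp: inj_on_def flip_def split: if_splits)

lemma flip_in_cube: "i < n \<Longrightarrow> x \<in> cube n \<Longrightarrow> flip x i \<in> cube n"
  by (auto simp: flip_def cube_def)

lemma sum_cube_flip:
  assumes "i < n"
  shows "(\<Sum>x\<in>cube n. F (flip x i)) = (\<Sum>x\<in>cube n. F x)"
  by (rule sum.reindex_bij_witness[where i="\<lambda>x. flip x i" and j="\<lambda>x. flip x i"])
     (auto simp: flip_in_cube assms)

lemma sum_cube_eq_0_if_flip_neg:
  assumes "i < n" and "\<And>x. x \<in> cube n \<Longrightarrow> F (flip x i) = - F x"
  shows "(\<Sum>x\<in>cube n. F x) = (0::real)"
proof -
  have "(\<Sum>x\<in>cube n. F x) = (\<Sum>x\<in>cube n. F (flip x i))"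
    by (rule sum_cube_flip[OF assms(1), symmetric])
  also have "\<dots> = - (\<Sum>x\<in>cube n. F x)"
    using assms(2) by (simp add: sum_negf)
  finally show ?thesis by simp
qed

lemma card_sym_diff_eq_1_iff:
  assumes "finite x" "finite y"
  shows "card (x - y) + card (y - x) = 1 \<longleftrightarrow> (\<exists>i. y = flip x i)"
proof
  assume "card (x - y) + card (y - x) = 1"
  then consider i where "x - y = {i}" "y - x = {}" | i where "x - y = {}" "y - x = {i}"
    using assms by (auto simp: add_is_1 card_1_singleton_iff)
  then show "\<exists>i. y = flip x i"
  proof cases
    case (1 i)
    then have "y = flip x i" by (auto simp: flip_def)
    then show ?thesis ..
  next
    case (2 i)
    then have "y = flip x i" by (auto simp: flip_def)
    then show ?thesis ..
  qed
next
  assume "\<exists>i. y = flip x i"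
  then obtain i where "y = flip x i" by blast
  then consider "x - y = {i}" "y - x = {}" | "x - y = {}" "y - x = {i}"
    by (cases "i \<in> x") (auto simp: flip_def)
  then show "card (x - y) + card (y - x) = 1"
  proof cases
    case 1
    show ?thesis unfolding 1 by simp
  next
    case 2
    show ?thesis unfolding 2 by simp
  qed
qed

lemma hamming_neighbours_eq_flips:
  assumes x: "x \<in> cube n"
  shows "{y \<in> cube n. card (x - y) + card (y - x) = 1} = flip x ` {..<n}"
proof (intro set_eqI iffI)
  fix y assume "y \<in> {y \<in> cube n. card (x - y) + card (y - x) = 1}"
  then have y: "y \<in> cube n" "card (x - y) + card (y - x) = 1"
    by auto
  then obtain i where i: "y = flip x i"
    using card_sym_diff_eq_1_iff[OF finite_of_mem_cube[OF x] finite_of_mem_cube[OF y(1)]] by auto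
  have "i \<in> x \<union> y"
    unfolding i flip_def by auto
  then have "i < n"
    using x y(1) by (auto simp: cube_def)
  then show "y \<in> flip x ` {..<n}"
    using i by blast
next
  fix y assume "y \<in> flip x ` {..<n}"
  then obtain i where "i < n" and i: "y = flip x i"
    by blast
  then have y: "y \<in> cube n"
    using x by (simp add: flip_in_cube)
  have "card (x - y) + card (y - x) = 1"
    using card_sym_diff_eq_1_iff[OF finite_of_mem_cube[OF x] finite_of_mem_cube[OF y]] i by blast
  with y show "y \<in> {y \<in> cube n. card (x - y) + card (y - x) = 1}"
    by simp
qed

definition walsh :: "nat set \<Rightarrow> nat set \<Rightarrow> real" where
  "walsh S x = (-1) ^ card (S \<inter> x)"

lemma walsh_commute: "walsh S x = walsh x S"
  by (simp add: walsh_def Int_commute)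

lemma walsh_mult:
  assumes "finite x"
  shows "walsh S x * walsh T x = walsh (sym_diff S T) x"
proof -
  have card_split: "card (A \<inter> x) = card ((A - B) \<inter> x) + card (A \<inter> B \<inter> x)" for A B
    using assms by (subst card_Un_disjoint[symmetric]) (auto intro: arg_cong[where f=card])
  have "card (sym_diff S T \<inter> x) = card ((S - T) \<inter> x) + card ((T - S) \<inter> x)"
    using assms by (subst card_Un_disjoint[symmetric]) (auto intro: arg_cong[where f=card])
  then show ?thesis
    using card_split[of S T] card_split[of T S]
    by (simp add: walsh_def Int_commute Int_left_commute power_add flip: power_mult_distrib)
qed

lemma walsh_flip:
  assumes "finite S"
  shows "walsh S (flip x i) = (if i \<in> S then - walsh S x else walsh S x)"
proof -
  have "flip x i = sym_diff x {i}"
    by (auto simp: flip_def)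
  then have "walsh S (flip x i) = walsh S x * walsh S {i}"
    using walsh_mult[OF assms, of x "{i}"] by (simp add: walsh_commute)
  then show ?thesis
    by (simp add: walsh_def)
qed

lemma sum_walsh:
  assumes "S \<in> cube n"
  shows "(\<Sum>x\<in>cube n. walsh S x) = (if S = {} then 2 ^ n else 0)"
proof (cases "S = {}")
  case True
  then show ?thesis
    by (simp add: walsh_def card_cube)
next
  case False
  then obtain i where "i \<in> S" "i < n"
    using assms by (auto simp: cube_def)
  then have "(\<Sum>x\<in>cube n. walsh S x) = 0"
    by (intro sum_cube_eq_0_if_flip_neg[of i]) (simp_all add: walsh_flip finite_of_mem_cube[OF assms])
  then show ?thesis
    using False by simp
qed

lemma walsh_orthogonal:
  assumes "S \<in> cube n" "T \<in> cube n"
  shows "(\<Sum>x\<in>cube n. walsh S x * walsh T x) = (if S = T then 2 ^ n else 0)"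
proof -
  have "sym_diff S T \<in> cube n"
    using assms by (auto simp: cube_def)
  moreover have "sym_diff S T = {} \<longleftrightarrow> S = T"
    by blast
  ultimately show ?thesis
    by (simp add: walsh_mult finite_of_mem_cube sum_walsh cong: sum.cong)
qed

definition walsh_transform :: "nat \<Rightarrow> (nat set \<Rightarrow> real) \<Rightarrow> nat set \<Rightarrow> real" where
  "walsh_transform n u S = (\<Sum>x\<in>cube n. walsh S x * u x)"

lemma walsh_transform_walsh_transform:
  assumes "x \<in> cube n"
  shows "walsh_transform n (walsh_transform n u) x = 2 ^ n * u x"
proof -
  have "walsh_transform n (walsh_transform n u) x
      = (\<Sum>y\<in>cube n. u y * (\<Sum>S\<in>cube n. walsh x S * walsh y S))"
    unfolding walsh_transform_def sum_distrib_left
    by (subst sum.swap) (simp add: walsh_commute mult_ac)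
  also have "\<dots> = (\<Sum>y\<in>cube n. if y = x then 2 ^ n * u x else 0)"
    by (intro sum.cong refl) (auto simp: walsh_orthogonal assms)
  finally show ?thesis
    using assms by simp
qed

lemma parseval:
  "(\<Sum>S\<in>cube n. (walsh_transform n u S)\<^sup>2) = 2 ^ n * (\<Sum>x\<in>cube n. (u x)\<^sup>2)"
proof -
  have "(\<Sum>S\<in>cube n. (walsh_transform n u S)\<^sup>2)
      = (\<Sum>x\<in>cube n. u x * walsh_transform n (walsh_transform n u) x)"
    unfolding walsh_transform_def power2_eq_square sum_distrib_left sum_distrib_right
    by (subst sum.swap) (simp add: walsh_commute mult_ac)
  also have "\<dots> = (\<Sum>x\<in>cube n. 2 ^ n * (u x)\<^sup>2)"
    by (intro sum.cong refl) (simp add: walsh_transform_walsh_transform power2_eq_square)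
  finally show ?thesis
    by (simp add: sum_distrib_left)
qed

lemma walsh_transform_flip:
  assumes "i < n" "S \<in> cube n"
  shows "walsh_transform n (\<lambda>x. v (flip x i)) S
           = (if i \<in> S then - walsh_transform n v S else walsh_transform n v S)"
proof -
  have "walsh_transform n (\<lambda>x. v (flip x i)) S = (\<Sum>x\<in>cube n. walsh S (flip x i) * v x)"
    unfolding walsh_transform_def
    using sum_cube_flip[OF assms(1), of "\<lambda>x. walsh S (flip x i) * v x"] by simp
  then show ?thesis
    by (simp add: walsh_flip finite_of_mem_cube[OF assms(2)] walsh_transform_def sum_negf)
qed

definition cube_laplacian :: "nat \<Rightarrow> (nat set \<Rightarrow> real) \<Rightarrow> nat set \<Rightarrow> real" where
  "cube_laplacian n v x = (\<Sum>i<n. (v x - v (flip x i)) / 2)"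

lemma walsh_transform_cube_laplacian:
  assumes "S \<in> cube n"
  shows "walsh_transform n (cube_laplacian n v) S = card S * walsh_transform n v S"
proof -
  have "walsh_transform n (cube_laplacian n v) S
      = (\<Sum>i<n. walsh_transform n (\<lambda>x. (v x - v (flip x i)) / 2) S)"
    unfolding walsh_transform_def cube_laplacian_def sum_distrib_left
    by (rule sum.swap)
  also have "\<dots> = (\<Sum>i<n. (walsh_transform n v S - walsh_transform n (\<lambda>x. v (flip x i)) S) / 2)"
    by (simp add: walsh_transform_def right_diff_distrib sum_subtractf flip: sum_divide_distrib)
  also have "\<dots> = (\<Sum>i<n. if i \<in> S then walsh_transform n v S else 0)"
    by (intro sum.cong refl) (simp add: walsh_transform_flip assms)
  also have "\<dots> = card S * walsh_transform n v S"
  proof -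
    have "{..<n} \<inter> S = S"
      using assms by (auto simp: cube_def)
    then show ?thesis
      by (simp flip: sum.inter_restrict)
  qed
  finally show ?thesis .
qed

definition walsh_mult_matrix :: "nat \<Rightarrow> (nat set \<Rightarrow> real) \<Rightarrow> nat set \<Rightarrow> nat set \<Rightarrow> real" where
  "walsh_mult_matrix n g S T = (\<Sum>x\<in>cube n. walsh S x * g x * walsh T x) / 2 ^ n"

lemma walsh_mult_matrix_eq:
  "walsh_mult_matrix n g S T = walsh_transform n g (sym_diff S T) / 2 ^ n"
  unfolding walsh_mult_matrix_def walsh_transform_def
  by (simp add: walsh_mult[symmetric] finite_of_mem_cube mult_ac cong: sum.cong)

lemma walsh_mult_matrix_apply:
  "(\<Sum>T\<in>cube n. walsh_mult_matrix n g S T * u T)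
     = walsh_transform n (\<lambda>x. g x * walsh_transform n u x) S / 2 ^ n"
  unfolding walsh_mult_matrix_def walsh_transform_def sum_distrib_left sum_divide_distrib
    sum_distrib_right
  by (subst sum.swap) (simp add: walsh_commute mult_ac)

lemma walsh_transform_mult:
  "walsh_transform n (\<lambda>x. g x * u x) S
     = (\<Sum>T\<in>cube n. walsh_mult_matrix n g S T * walsh_transform n u T)"
proof -
  have "walsh_transform n (\<lambda>x. g x * walsh_transform n (walsh_transform n u) x) S
      = 2 ^ n * walsh_transform n (\<lambda>x. g x * u x) S"
    by (simp add: walsh_transform_def[of n _ S] walsh_transform_walsh_transform sum_distrib_left
        mult_ac cong: sum.cong)
  then show ?thesis
    by (simp add: walsh_mult_matrix_apply)
qed

lemma walsh_mult_matrix_isometric: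
  assumes "\<And>x. x \<in> cube n \<Longrightarrow> (g x)\<^sup>2 = 1"
  shows "(\<Sum>S\<in>cube n. (\<Sum>T\<in>cube n. walsh_mult_matrix n g S T * u T)\<^sup>2) = (\<Sum>T\<in>cube n. (u T)\<^sup>2)"
proof -
  have "(\<Sum>S\<in>cube n. (\<Sum>T\<in>cube n. walsh_mult_matrix n g S T * u T)\<^sup>2)
      = (\<Sum>S\<in>cube n. (walsh_transform n (\<lambda>x. g x * walsh_transform n u x) S)\<^sup>2) / (2 ^ n)\<^sup>2"
    by (simp add: walsh_mult_matrix_apply power_divide sum_divide_distrib)
  also have "\<dots> = 2 ^ n * (\<Sum>x\<in>cube n. (walsh_transform n u x)\<^sup>2) / (2 ^ n)\<^sup>2"
    by (simp add: parseval power_mult_distrib assms cong: sum.cong)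
  also have "\<dots> = (\<Sum>T\<in>cube n. (u T)\<^sup>2)"
    by (simp only: parseval) (simp add: power2_eq_square)
  finally show ?thesis .
qed

section \<open>Commutators of banded isometries with diagonal matrices\<close>

lemma hermite_identity_nat:
  assumes "d > 0"
  shows "(\<Sum>r<d. (m + r) div d) = (m::nat)"
proof (induction m)
  case 0
  show ?case by simp
next
  case (Suc m)
  have "(\<Sum>r<d. (Suc m + r) div d) = (\<Sum>r<Suc d. (m + r) div d) - m div d"
    by (subst sum.lessThan_Suc_shift) simp
  also have "\<dots> = (\<Sum>r<d. (m + r) div d) + (m + d) div d - m div d"
    by simp
  also have "(m + d) div d = m div d + 1"
    using assms by simp
  finally show ?case
    using Suc by simp
qed

lemma add_div_le_Suc_add_div:
  assumes "d > 0" "a \<le> b + d"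
  shows "(a + r) div d \<le> Suc ((b + r) div (d::nat))"
proof -
  have "(a + r) div d \<le> (b + r + d) div d"
    using assms by (intro div_le_mono) linarith
  also have "\<dots> = Suc ((b + r) div d)"
    using assms by simp
  finally show ?thesis .
qed

lemma sin_cos_quarter_turn_diff:
  assumes "a \<le> Suc b" "b \<le> Suc a"
  shows "sin (pi / 2 * a) * cos (pi / 2 * b) - cos (pi / 2 * a) * sin (pi / 2 * b) = real a - real b"
proof -
  consider "a = b" | "a = Suc b" | "b = Suc a"
    using assms by linarith
  then have "sin (pi / 2 * (real a - real b)) = real a - real b"
    by cases simp_all
  then show ?thesis
    by (simp add: sin_diff right_diff_distrib)
qed

lemma diff_eq_sum_sin_cos_div:
  assumes "d > 0" "a \<le> b + d" "b \<le> a + d"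
  shows "real a - real b = (\<Sum>r<d. sin (pi / 2 * ((a + r) div d)) * cos (pi / 2 * ((b + r) div d))
                                   - cos (pi / 2 * ((a + r) div d)) * sin (pi / 2 * ((b + r) div d)))"
proof -
  have "real a - real b = real (\<Sum>r<d. (a + r) div d) - real (\<Sum>r<d. (b + r) div d)"
    using assms(1) by (simp add: hermite_identity_nat)
  also have "\<dots> = (\<Sum>r<d. real ((a + r) div d) - real ((b + r) div d))"
    by (simp add: sum_subtractf)
  also have "\<dots> = (\<Sum>r<d. sin (pi / 2 * ((a + r) div d)) * cos (pi / 2 * ((b + r) div d))
                         - cos (pi / 2 * ((a + r) div d)) * sin (pi / 2 * ((b + r) div d)))"
    using assms by (intro sum.cong refl sin_cos_quarter_turn_diff[symmetric] add_div_le_Suc_add_div)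
  finally show ?thesis .
qed

lemma rotated_commutator_bound:
  fixes K :: "'a \<Rightarrow> 'a \<Rightarrow> real"
  assumes isometric: "\<And>u. (\<Sum>S\<in>I. (\<Sum>T\<in>I. K S T * u T)\<^sup>2) = (\<Sum>T\<in>I. (u T)\<^sup>2)"
    and unit: "\<And>S. (c S)\<^sup>2 + (s S)\<^sup>2 = 1"
  shows "(\<Sum>S\<in>I. (s S * (\<Sum>T\<in>I. K S T * (c T * u T)) - c S * (\<Sum>T\<in>I. K S T * (s T * u T)))\<^sup>2)
           \<le> (\<Sum>T\<in>I. (u T)\<^sup>2)"
proof -
  define A where "A S = (\<Sum>T\<in>I. K S T * (c T * u T))" for S
  define B where "B S = (\<Sum>T\<in>I. K S T * (s T * u T))" for S
  have "(s S * A S - c S * B S)\<^sup>2 \<le> (A S)\<^sup>2 + (B S)\<^sup>2" for S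
  proof -
    have "(s S * A S - c S * B S)\<^sup>2 \<le> (s S * A S - c S * B S)\<^sup>2 + (c S * A S + s S * B S)\<^sup>2"
      by simp
    also have "\<dots> = ((c S)\<^sup>2 + (s S)\<^sup>2) * ((A S)\<^sup>2 + (B S)\<^sup>2)"
      by (simp add: power2_eq_square algebra_simps)
    finally show ?thesis
      by (simp add: unit)
  qed
  then have "(\<Sum>S\<in>I. (s S * A S - c S * B S)\<^sup>2) \<le> (\<Sum>S\<in>I. (A S)\<^sup>2) + (\<Sum>S\<in>I. (B S)\<^sup>2)"
    by (simp add: sum_mono flip: sum.distrib)
  also have "\<dots> = (\<Sum>T\<in>I. (c T * u T)\<^sup>2 + (s T * u T)\<^sup>2)"
    by (simp add: A_def B_def isometric sum.distrib)
  also have "\<dots> = (\<Sum>T\<in>I. (u T)\<^sup>2)"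
    by (simp add: power_mult_distrib unit flip: distrib_right)
  finally show ?thesis
    by (simp add: A_def B_def)
qed

lemma banded_commutator_bound:
  fixes K :: "'a \<Rightarrow> 'a \<Rightarrow> real" and h :: "'a \<Rightarrow> nat"
  assumes isometric: "\<And>u. (\<Sum>S\<in>I. (\<Sum>T\<in>I. K S T * u T)\<^sup>2) = (\<Sum>T\<in>I. (u T)\<^sup>2)"
    and banded: "\<And>S T. S \<in> I \<Longrightarrow> T \<in> I \<Longrightarrow> K S T \<noteq> 0 \<Longrightarrow> h S \<le> h T + d \<and> h T \<le> h S + d"
  shows "(\<Sum>S\<in>I. (\<Sum>T\<in>I. (real (h S) - real (h T)) * K S T * u T)\<^sup>2)
           \<le> (real d)\<^sup>2 * (\<Sum>T\<in>I. (u T)\<^sup>2)"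
proof (cases "d = 0")
  case True
  then have entry: "(real (h S) - real (h T)) * K S T = 0" if "S \<in> I" "T \<in> I" for S T
    using banded[OF that] by (cases "K S T = 0") auto
  then show ?thesis
    using True by (simp add: entry cong: sum.cong)
next
  case False
  define c where "c r S = cos (pi / 2 * ((h S + r) div d))" for r S
  define s where "s r S = sin (pi / 2 * ((h S + r) div d))" for r S
  define Z where "Z r S = s r S * (\<Sum>T\<in>I. K S T * (c r T * u T))
                          - c r S * (\<Sum>T\<in>I. K S T * (s r T * u T))" for r S
  have entry: "(real (h S) - real (h T)) * K S T = (\<Sum>r<d. s r S * c r T - c r S * s r T) * K S T"
    if "S \<in> I" "T \<in> I" for S T
    using banded[OF that] diff_eq_sum_sin_cos_div[of d "h S" "h T"] False
    by (cases "K S T = 0") (auto simp: c_def s_def)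
  have row: "(\<Sum>T\<in>I. (real (h S) - real (h T)) * K S T * u T) = (\<Sum>r<d. Z r S)"
    if "S \<in> I" for S
  proof -
    have "(\<Sum>T\<in>I. (real (h S) - real (h T)) * K S T * u T)
        = (\<Sum>r<d. \<Sum>T\<in>I. (s r S * c r T - c r S * s r T) * K S T * u T)"
      using that by (simp add: entry sum_distrib_right cong: sum.cong) (rule sum.swap)
    also have "\<dots> = (\<Sum>r<d. Z r S)"
      by (simp add: Z_def sum_distrib_left sum_subtractf algebra_simps)
    finally show ?thesis .
  qed
  have "(\<Sum>S\<in>I. (\<Sum>T\<in>I. (real (h S) - real (h T)) * K S T * u T)\<^sup>2)
      = (\<Sum>S\<in>I. (\<Sum>r<d. Z r S)\<^sup>2)"
    by (simp add: row)
  also have "\<dots> \<le> (\<Sum>S\<in>I. real d * (\<Sum>r<d. (Z r S)\<^sup>2))"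
    using sum_squared_le_sum_of_squares[of "\<lambda>r. Z r _" "{..<d}"]
    by (intro sum_mono) (simp add: mult.commute)
  also have "\<dots> = real d * (\<Sum>r<d. \<Sum>S\<in>I. (Z r S)\<^sup>2)"
    by (simp add: sum_distrib_left sum.swap[of _ I])
  also have "\<dots> \<le> real d * (\<Sum>r<d. \<Sum>T\<in>I. (u T)\<^sup>2)"
    unfolding Z_def
    by (intro mult_left_mono sum_mono rotated_commutator_bound[OF isometric])
       (simp_all add: c_def s_def)
  also have "\<dots> = (real d)\<^sup>2 * (\<Sum>T\<in>I. (u T)\<^sup>2)"
    by (simp add: power2_eq_square)
  finally show ?thesis .
qed

section \<open>Multilinear representation, degree and Walsh spectrum\<close>

lemma prod_indicator_eq_of_bool_subset:
  assumes "finite S"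
  shows "(\<Prod>i\<in>S. if i \<in> x then 1 else 0) = (of_bool (S \<subseteq> x) :: real)"
  using assms by (induction S rule: finite_induct) auto

lemma mlpoly_eval_eq: "mlpoly_eval n c x = (\<Sum>S\<in>cube n. c S * of_bool (S \<subseteq> x))"
  unfolding mlpoly_eval_def
  by (intro sum.cong refl) (simp add: prod_indicator_eq_of_bool_subset finite_of_mem_cube)

lemma mlpoly_eval_sum:
  "mlpoly_eval n (\<lambda>S. \<Sum>U\<in>A. a U * c U S) x = (\<Sum>U\<in>A. a U * mlpoly_eval n (c U) x)"
  unfolding mlpoly_eval_def sum_distrib_left sum_distrib_right
  by (subst sum.swap) (simp add: mult_ac)

lemma mlpoly_coeff_eq_0_if_eval_eq_0:
  assumes "\<And>x. x \<in> cube n \<Longrightarrow> mlpoly_eval n e x = 0" and "S \<in> cube n"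
  shows "e S = 0"
  using finite_of_mem_cube[OF assms(2)] assms(2)
proof (induction S rule: finite_psubset_induct)
  case (psubset A)
  have lower: "e T * of_bool (T \<subseteq> A) = 0" if "T \<in> cube n - {A}" for T
    using that psubset.IH by (cases "T \<subseteq> A") auto
  have "mlpoly_eval n e A = e A * of_bool (A \<subseteq> A) + (\<Sum>T\<in>cube n - {A}. e T * of_bool (T \<subseteq> A))"
    unfolding mlpoly_eval_eq by (rule sum.remove[OF finite_cube psubset.prems])
  also have "(\<Sum>T\<in>cube n - {A}. e T * of_bool (T \<subseteq> A)) = 0"
    by (intro sum.neutral ballI lower)
  finally show ?case
    using assms(1) psubset.prems by simp
qed

lemma represents_unique:
  assumes "represents n f c" "represents n f c'"
  shows "c = c'"
proof
  fix S
  have "mlpoly_eval n (\<lambda>T. c T - c' T) x = 0" if "x \<in> cube n" for x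
    using assms that by (simp add: represents_def mlpoly_eval_def left_diff_distrib sum_subtractf)
  then show "c S = c' S"
    using assms mlpoly_coeff_eq_0_if_eval_eq_0[of n "\<lambda>T. c T - c' T" S]
    by (cases "S \<in> cube n") (auto simp: represents_def)
qed

lemma walsh_eq_mlpoly_eval:
  assumes U: "U \<in> cube n"
  shows "walsh U x = mlpoly_eval n (\<lambda>S. of_bool (S \<subseteq> U) * (-2) ^ card S) x"
proof -
  have fin: "finite U"
    using U by (rule finite_of_mem_cube)
  have "walsh U x = (\<Prod>i\<in>U. (if i \<in> x then -2 else 0) + 1)"
    using fin by (induction U rule: finite_induct) (auto simp: walsh_def Int_insert_left)
  also have "\<dots> = (\<Sum>S\<in>Pow U. \<Prod>i\<in>S. if i \<in> x then -2 else 0)"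
    using fin by (simp add: prod_add)
  also have "\<dots> = (\<Sum>S\<in>Pow U. (-2) ^ card S * of_bool (S \<subseteq> x))"
  proof (intro sum.cong refl)
    fix S assume "S \<in> Pow U"
    then have "finite S"
      using fin by (auto intro: finite_subset)
    then show "(\<Prod>i\<in>S. if i \<in> x then -2 else 0) = (-2) ^ card S * (of_bool (S \<subseteq> x) :: real)"
      by (induction S rule: finite_induct) auto
  qed
  also have "Pow U = cube n \<inter> {S. S \<subseteq> U}"
    using U by (auto simp: cube_def)
  finally show ?thesis
    by (simp add: mlpoly_eval_eq sum.inter_filter mult_ac)
qed

lemma represents_exists: "\<exists>c. represents n f c"
proof -
  define a where "a U = walsh_transform n (\<lambda>x. of_bool (f x)) U / 2 ^ n" for U
  define c where "c S = (\<Sum>U\<in>cube n. a U * (of_bool (S \<subseteq> U) * (-2) ^ card S))" for S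
  have "c S = 0" if "S \<notin> cube n" for S
  proof -
    have "\<not> S \<subseteq> U" if "U \<in> cube n" for U
      using \<open>S \<notin> cube n\<close> that unfolding cube_def by blast
    then show ?thesis
      by (simp add: c_def)
  qed
  moreover have "mlpoly_eval n c x = of_bool (f x)" if "x \<in> cube n" for x
  proof -
    have "mlpoly_eval n c x = (\<Sum>U\<in>cube n. a U * walsh U x)"
      unfolding c_def mlpoly_eval_sum by (simp add: walsh_eq_mlpoly_eval)
    also have "\<dots> = (\<Sum>U\<in>cube n. walsh x U * walsh_transform n (\<lambda>x. of_bool (f x)) U) / 2 ^ n"
      by (simp add: a_def walsh_commute sum_divide_distrib mult_ac)
    also have "\<dots> = walsh_transform n (walsh_transform n (\<lambda>x. of_bool (f x))) x / 2 ^ n"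
      by (simp only: walsh_transform_def[of n _ x])
    finally show ?thesis
      using that by (simp add: walsh_transform_walsh_transform)
  qed
  ultimately show ?thesis
    unfolding represents_def by blast
qed

lemma represents_ml_coeffs: "represents n f (ml_coeffs n f)"
  unfolding ml_coeffs_def
  by (rule theI'[of "represents n f", OF ex_ex1I[OF represents_exists represents_unique]])

lemma card_le_bdeg:
  assumes "S \<in> cube n" "ml_coeffs n f S \<noteq> 0"
  shows "card S \<le> bdeg n f"
  unfolding bdeg_def
proof (rule Max_ge)
  have "{card S |S. S \<in> cube n \<and> ml_coeffs n f S \<noteq> 0} \<subseteq> card ` cube n"
    by auto
  then show "finite (insert 0 {card S |S. S \<in> cube n \<and> ml_coeffs n f S \<noteq> 0})"
    by (auto intro: finite_subset)
  show "card S \<in> insert 0 {card S |S. S \<in> cube n \<and> ml_coeffs n f S \<noteq> 0}"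
    using assms by auto
qed

lemma walsh_transform_subcube_indicator:
  assumes "U \<in> cube n" "\<not> U \<subseteq> S"
  shows "walsh_transform n (\<lambda>x. of_bool (S \<subseteq> x)) U = 0"
proof -
  obtain i where i: "i \<in> U" "i \<notin> S"
    using assms(2) by blast
  moreover have "i < n"
    using assms(1) i(1) by (auto simp: cube_def)
  moreover have "S \<subseteq> flip x i \<longleftrightarrow> S \<subseteq> x" for x
    using i(2) by (auto simp: flip_def)
  ultimately show ?thesis
    unfolding walsh_transform_def
    by (intro sum_cube_eq_0_if_flip_neg[of i]) (simp_all add: walsh_flip finite_of_mem_cube[OF assms(1)])
qed

lemma walsh_transform_eq_0_above_bdeg:
  assumes "U \<in> cube n" "bdeg n f < card U"
  shows "walsh_transform n (\<lambda>x. of_bool (f x)) U = 0"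
proof -
  let ?c = "ml_coeffs n f"
  have "walsh_transform n (\<lambda>x. of_bool (f x)) U
      = walsh_transform n (\<lambda>x. \<Sum>S\<in>cube n. ?c S * of_bool (S \<subseteq> x)) U"
    using represents_ml_coeffs[of n f]
    by (simp add: walsh_transform_def represents_def mlpoly_eval_eq cong: sum.cong)
  also have "\<dots> = (\<Sum>S\<in>cube n. ?c S * walsh_transform n (\<lambda>x. of_bool (S \<subseteq> x)) U)"
    unfolding walsh_transform_def sum_distrib_left
    by (subst sum.swap) (simp add: mult_ac)
  also have "\<dots> = 0"
  proof (intro sum.neutral ballI)
    fix S assume S: "S \<in> cube n"
    show "?c S * walsh_transform n (\<lambda>x. of_bool (S \<subseteq> x)) U = 0"
    proof (cases "?c S = 0")
      case False
      then have "card S < card U"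
        using card_le_bdeg[OF S False] assms(2) by linarith
      then have "\<not> U \<subseteq> S"
        using card_mono[OF finite_of_mem_cube[OF S]] by (meson not_le)
      then show ?thesis
        by (simp add: walsh_transform_subcube_indicator[OF assms(1)])
    qed simp
  qed
  finally show ?thesis .
qed

definition boolean_sign :: "(nat set \<Rightarrow> bool) \<Rightarrow> nat set \<Rightarrow> real" where
  "boolean_sign f x = (if f x then -1 else 1)"

lemma boolean_sign_squared [simp]: "(boolean_sign f x)\<^sup>2 = 1"
  by (simp add: boolean_sign_def)

lemma walsh_transform_boolean_sign_eq_0_above_bdeg:
  assumes "U \<in> cube n" "bdeg n f < card U"
  shows "walsh_transform n (boolean_sign f) U = 0"
proof -
  have pointwise: "walsh U x * boolean_sign f x = walsh U x - 2 * (walsh U x * of_bool (f x))" for x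
    by (simp add: boolean_sign_def)
  have "walsh_transform n (boolean_sign f) U
      = (\<Sum>x\<in>cube n. walsh U x) - 2 * walsh_transform n (\<lambda>x. of_bool (f x)) U"
    unfolding walsh_transform_def by (simp only: pointwise sum_subtractf sum_distrib_left)
  also have "\<dots> = 0"
    using assms by (auto simp: sum_walsh walsh_transform_eq_0_above_bdeg)
  finally show ?thesis .
qed

lemma walsh_mult_matrix_boolean_sign_banded:
  assumes "S \<in> cube n" "T \<in> cube n" "walsh_mult_matrix n (boolean_sign f) S T \<noteq> 0"
  shows "card S \<le> card T + bdeg n f \<and> card T \<le> card S + bdeg n f"
proof -
  have "sym_diff S T \<in> cube n"
    using assms(1,2) by (auto simp: cube_def)
  moreover have "walsh_transform n (boolean_sign f) (sym_diff S T) \<noteq> 0"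
    using assms(3) by (simp add: walsh_mult_matrix_eq)
  ultimately have "card (sym_diff S T) \<le> bdeg n f"
    using walsh_transform_boolean_sign_eq_0_above_bdeg by (meson not_le)
  moreover have "card S - card T \<le> card (S - T)" "card T - card S \<le> card (T - S)"
    using finite_of_mem_cube[OF assms(1)] finite_of_mem_cube[OF assms(2)]
    by (simp_all add: diff_card_le_card_Diff)
  moreover have "card (S - T) + card (T - S) = card (sym_diff S T)"
    by (rule card_Un_disjoint[symmetric])
       (use finite_of_mem_cube[OF assms(1)] finite_of_mem_cube[OF assms(2)] in auto)
  ultimately show ?thesis
    by linarith
qed

section \<open>The sensitivity operator\<close>

lemma sens_adj_apply:
  assumes x: "x \<in> cube n"
  shows "(\<Sum>y\<in>cube n. sens_adj n f x y * v y)
           = (\<Sum>i<n. if f x \<noteq> f (flip x i) then v (flip x i) else 0)"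
proof -
  have "(\<Sum>y\<in>cube n. sens_adj n f x y * v y)
      = (\<Sum>y\<in>{y \<in> cube n. card (x - y) + card (y - x) = 1}. if f x \<noteq> f y then v y else 0)"
    unfolding sum.inter_filter[OF finite_cube] by (intro sum.cong refl) (auto simp: sens_adj_def x)
  also have "\<dots> = (\<Sum>y\<in>flip x ` {..<n}. if f x \<noteq> f y then v y else 0)"
    by (simp only: hamming_neighbours_eq_flips[OF x])
  also have "\<dots> = (\<Sum>i<n. if f x \<noteq> f (flip x i) then v (flip x i) else 0)"
    by (simp add: sum.reindex inj_on_flip)
  finally show ?thesis .
qed

lemma sens_adj_apply_eq_commutator:
  assumes "x \<in> cube n"
  shows "(\<Sum>y\<in>cube n. sens_adj n f x y * v y)
           = boolean_sign f x * (cube_laplacian n (\<lambda>y. boolean_sign f y * v y) x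
                                   - boolean_sign f x * cube_laplacian n v x)"
proof -
  let ?g = "boolean_sign f"
  have "?g x * (cube_laplacian n (\<lambda>y. ?g y * v y) x - ?g x * cube_laplacian n v x)
      = ?g x * cube_laplacian n (\<lambda>y. ?g y * v y) x - cube_laplacian n v x"
    by (simp add: boolean_sign_def)
  also have "\<dots> = (\<Sum>i<n. ?g x * ((?g x * v x - ?g (flip x i) * v (flip x i)) / 2)
                            - (v x - v (flip x i)) / 2)"
    by (simp only: cube_laplacian_def sum_distrib_left sum_subtractf)
  also have "\<dots> = (\<Sum>i<n. if f x \<noteq> f (flip x i) then v (flip x i) else 0)"
    by (intro sum.cong refl) (simp add: boolean_sign_def field_simps)
  finally show ?thesis
    using sens_adj_apply[OF assms] by simp
qed

lemma walsh_transform_laplacian_commutator: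
  assumes "S \<in> cube n"
  shows "walsh_transform n (\<lambda>x. cube_laplacian n (\<lambda>y. g y * v y) x - g x * cube_laplacian n v x) S
           = (\<Sum>T\<in>cube n. (real (card S) - real (card T)) * walsh_mult_matrix n g S T
                           * walsh_transform n v T)"
proof -
  have "walsh_transform n (\<lambda>x. cube_laplacian n (\<lambda>y. g y * v y) x - g x * cube_laplacian n v x) S
      = walsh_transform n (cube_laplacian n (\<lambda>y. g y * v y)) S
          - walsh_transform n (\<lambda>x. g x * cube_laplacian n v x) S"
    by (simp add: walsh_transform_def right_diff_distrib sum_subtractf)
  also have "\<dots> = card S * (\<Sum>T\<in>cube n. walsh_mult_matrix n g S T * walsh_transform n v T)
                   - (\<Sum>T\<in>cube n. walsh_mult_matrix n g S T * (card T * walsh_transform n v T))"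
    using assms by (simp add: walsh_transform_cube_laplacian walsh_transform_mult cong: sum.cong)
  also have "\<dots> = (\<Sum>T\<in>cube n. (real (card S) - real (card T)) * walsh_mult_matrix n g S T
                                * walsh_transform n v T)"
    by (simp add: sum_distrib_left sum_subtractf algebra_simps)
  finally show ?thesis .
qed

lemma sens_adj_quadratic_bound:
  "(\<Sum>x\<in>cube n. (\<Sum>y\<in>cube n. sens_adj n f x y * v y)\<^sup>2)
     \<le> (real (bdeg n f))\<^sup>2 * (\<Sum>y\<in>cube n. (v y)\<^sup>2)"
proof -
  let ?g = "boolean_sign f"
  define w where "w x = cube_laplacian n (\<lambda>y. ?g y * v y) x - ?g x * cube_laplacian n v x" for x
  have "(\<Sum>x\<in>cube n. (\<Sum>y\<in>cube n. sens_adj n f x y * v y)\<^sup>2) = (\<Sum>x\<in>cube n. (w x)\<^sup>2)"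
    by (simp add: sens_adj_apply_eq_commutator w_def power_mult_distrib cong: sum.cong)
  also have "\<dots> = (\<Sum>S\<in>cube n. (walsh_transform n w S)\<^sup>2) / 2 ^ n"
    by (simp add: parseval)
  also have "(\<Sum>S\<in>cube n. (walsh_transform n w S)\<^sup>2)
      = (\<Sum>S\<in>cube n. (\<Sum>T\<in>cube n. (real (card S) - real (card T)) * walsh_mult_matrix n ?g S T
                                      * walsh_transform n v T)\<^sup>2)"
    unfolding w_def by (simp add: walsh_transform_laplacian_commutator cong: sum.cong)
  also have "\<dots> \<le> (real (bdeg n f))\<^sup>2 * (\<Sum>T\<in>cube n. (walsh_transform n v T)\<^sup>2)"
    by (rule banded_commutator_bound[OF walsh_mult_matrix_isometric
          walsh_mult_matrix_boolean_sign_banded]) simp_all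
  also have "(\<Sum>T\<in>cube n. (walsh_transform n v T)\<^sup>2) = 2 ^ n * (\<Sum>y\<in>cube n. (v y)\<^sup>2)"
    by (rule parseval)
  finally show ?thesis
    by (simp add: divide_right_mono)
qed

lemma spec_norm_le:
  assumes "0 \<le> c"
    and "\<And>v. (\<Sum>x\<in>cube n. (\<Sum>y\<in>cube n. A x y * v y)\<^sup>2) \<le> c\<^sup>2 * (\<Sum>y\<in>cube n. (v y)\<^sup>2)"
  shows "spec_norm n A \<le> c"
proof -
  let ?N = "\<lambda>v. sqrt (\<Sum>x\<in>cube n. (\<Sum>y\<in>cube n. A x y * v y)\<^sup>2)"
  let ?V = "{?N v |v. (\<Sum>y\<in>cube n. (v y)\<^sup>2) \<le> 1}"
  have "?N (\<lambda>_. 0) \<in> ?V"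
    by (intro CollectI exI[of _ "\<lambda>_. 0"]) simp
  moreover have "t \<le> c" if "t \<in> ?V" for t
  proof -
    obtain v where t: "t = ?N v" and v: "(\<Sum>y\<in>cube n. (v y)\<^sup>2) \<le> 1"
      using \<open>t \<in> ?V\<close> by blast
    have "t \<le> sqrt (c\<^sup>2 * (\<Sum>y\<in>cube n. (v y)\<^sup>2))"
      unfolding t by (rule real_sqrt_le_mono[OF assms(2)])
    also have "\<dots> \<le> sqrt (c\<^sup>2)"
      using v by (intro real_sqrt_le_mono mult_left_le) simp_all
    also have "\<dots> = c"
      using assms(1) by simp
    finally show ?thesis .
  qed
  ultimately show ?thesis
    unfolding spec_norm_def by (intro cSup_least) auto
qed

theorem theorem4p1:
  fixes n :: nat and f :: "nat set \<Rightarrow> bool"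
  shows "sens_lambda n f \<le> real (bdeg n f)"
  unfolding sens_lambda_def
  by (intro spec_norm_le sens_adj_quadratic_bound) simp

end
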